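(* Let $X_1,X_2,\dots$ be i.i.d. exponential random variables with mean $1$ and $\lambda_1,\lambda_2,\dots$ positive reals. Then for all $t\ge0$ and $k\ge1$, $$\frac{t^k}{\prod_{i=1}^k(k+\lambda_it)}\prod_{i=1}^k\lambda_i\le\mathbb{P}\Big(\sum_{i=1}^kX_i/\lambda_i\le t\Big)\le\Big(\frac{et}{k}\Big)^k\prod_{i=1}^k\lambda_i.$$ Moreover, if $\lambda_i\ge\lambda>0$ for all $i$ and $\Lambda:=\sum_{i=1}^k1/\lambda_i$, then for all $t\ge\Lambda$, $$\mathbb{P}\Big(\sum_{i=1}^kX_i/\lambda_i\ge t\Big)\le\exp\Big(-\frac{\lambda(t-\Lambda)^2}{2t}\Big).$$ *)

theory Defs
  imports "HOL-Probability.Probability"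
begin

end

theory Submission
  imports Defs
begin

text \<open>
  The lower bound is the probability of the event that every \<open>X\<^sub>i/\<lambda>\<^sub>i\<close> is at most \<open>t/k\<close>,
  which factorises by independence, combined with \<open>a/(1+a) \<le> 1 - e\<^sup>-\<^sup>a\<close>.
  Both upper bounds are Chernoff bounds: \<open>\<Sum>X\<^sub>i/\<lambda>\<^sub>i\<close> has moment generating function
  \<open>\<Prod>1/(1 - c/\<lambda>\<^sub>i)\<close> for \<open>c < min \<lambda>\<^sub>i\<close>. For the lower tail take \<open>c = -k/t\<close>; for the upper
  tail take \<open>c = \<lambda>(1 - \<Lambda>/t)\<close> and estimate \<open>-ln(1-x) \<le> x + x\<^sup>2/(2(1-x))\<close>.
\<close>

lemma minus_ln_one_minus_le:
  fixes x :: real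
  assumes "0 \<le> x" "x < 1"
  shows "- ln (1 - x) \<le> x + x\<^sup>2 / (2 * (1 - x))"
proof -
  define f where "f y = y + y\<^sup>2 / (2 * (1 - y)) + ln (1 - y)" for y :: real
  have "f 0 \<le> f x"
  proof (rule DERIV_nonneg_imp_increasing_open[of 0 x])
    fix y assume y: "0 < y" "y < x"
    then have y1: "y < 1" using assms by simp
    have "(f has_real_derivative
            1 + (2 * y * (2 * (1 - y)) + y\<^sup>2 * 2) / (2 * (1 - y))\<^sup>2 - 1 / (1 - y)) (at y)"
      unfolding f_def using y1 by (auto intro!: derivative_eq_intros simp: power2_eq_square)
    moreover have "1 + (2 * y * (2 * (1 - y)) + y\<^sup>2 * 2) / (2 * (1 - y))\<^sup>2 - 1 / (1 - y)
                   = y\<^sup>2 / (2 * (1 - y)\<^sup>2)"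
      using y1 by (simp add: divide_simps power2_eq_square) (simp add: algebra_simps)
    ultimately show "\<exists>d. (f has_real_derivative d) (at y) \<and> 0 \<le> d" by auto
  next
    show "continuous_on {0..x} f" unfolding f_def using assms by (auto intro!: continuous_intros)
  qed (use assms in auto)
  then show ?thesis by (simp add: f_def)
qed

lemma inverse_one_minus_le_exp:
  fixes x a :: real
  assumes "0 \<le> x" "x \<le> a" "a < 1"
  shows "1 / (1 - x) \<le> exp (x * (1 + a / (2 * (1 - a))))"
proof -
  have "x / (1 - x) \<le> a / (1 - a)"
    using assms by (intro frac_le) auto
  then have "x / 2 * (x / (1 - x)) \<le> x / 2 * (a / (1 - a))"
    using assms by (intro mult_left_mono) auto
  then have quadratic_le: "x + x\<^sup>2 / (2 * (1 - x)) \<le> x * (1 + a / (2 * (1 - a)))"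
    by (simp add: power2_eq_square algebra_simps)
  have "1 / (1 - x) = exp (- ln (1 - x))"
    using assms by (simp add: exp_minus inverse_eq_divide)
  also have "\<dots> \<le> exp (x + x\<^sup>2 / (2 * (1 - x)))"
    using minus_ln_one_minus_le[of x] assms by simp
  also have "\<dots> \<le> exp (x * (1 + a / (2 * (1 - a))))"
    using quadratic_le by simp
  finally show ?thesis .
qed

lemma divide_one_plus_le_one_minus_exp:
  fixes a :: real
  assumes "0 \<le> a"
  shows "a / (1 + a) \<le> 1 - exp (- a)"
proof -
  have "exp (- a) \<le> 1 / (1 + a)"
    using exp_ge_add_one_self[of a] assms by (simp add: exp_minus field_simps)
  moreover have "1 - 1 / (1 + a) = a / (1 + a)" using assms by (simp add: field_simps)
  ultimately show ?thesis by linarith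
qed

context prob_space
begin

lemma expectation_prod_indep_vars:
  fixes g :: "'i \<Rightarrow> real \<Rightarrow> real"
  assumes "indep_vars (\<lambda>_. borel) X I" "finite I"
    and "\<And>i. i \<in> I \<Longrightarrow> g i \<in> borel_measurable borel"
    and "\<And>i. i \<in> I \<Longrightarrow> integrable M (\<lambda>\<omega>. g i (X i \<omega>))"
  shows "integrable M (\<lambda>\<omega>. \<Prod>i\<in>I. g i (X i \<omega>))"
    and "expectation (\<lambda>\<omega>. \<Prod>i\<in>I. g i (X i \<omega>)) = (\<Prod>i\<in>I. expectation (\<lambda>\<omega>. g i (X i \<omega>)))"
proof -
  have "indep_vars (\<lambda>_. borel) (\<lambda>i \<omega>. g i (X i \<omega>)) I"
    using assms(1,3) by (rule indep_vars_compose2)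
  then show "integrable M (\<lambda>\<omega>. \<Prod>i\<in>I. g i (X i \<omega>))"
    and "expectation (\<lambda>\<omega>. \<Prod>i\<in>I. g i (X i \<omega>)) = (\<Prod>i\<in>I. expectation (\<lambda>\<omega>. g i (X i \<omega>)))"
    using indep_vars_integrable[OF assms(2) _ assms(4)]
      indep_vars_lebesgue_integral[OF assms(2) _ assms(4)] by auto
qed

lemma exponential_distributed_mgf:
  assumes D: "distributed M lborel X (exponential_density r)" and r: "0 < r" and "u < r"
  shows "has_bochner_integral M (\<lambda>\<omega>. exp (u * X \<omega>)) (r / (r - u))"
proof (rule has_bochner_integral_nn_integral)
  have [measurable]: "X \<in> borel_measurable M" using distributed_measurable[OF D] by simp
  show "(\<lambda>\<omega>. exp (u * X \<omega>)) \<in> borel_measurable M" by measurable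
  show "0 \<le> r / (r - u)" using r \<open>u < r\<close> by simp
  have "(\<integral>\<^sup>+\<omega>. ennreal (exp (u * X \<omega>)) \<partial>M)
        = (\<integral>\<^sup>+x. ennreal (exponential_density r x) * ennreal (exp (u * x)) \<partial>lborel)"
    by (subst distributed_nn_integral[OF D, symmetric]) auto
  also have "\<dots> = (\<integral>\<^sup>+x. ennreal (r / (r - u)) * ennreal (erlang_density 0 (r - u) x * x ^ 0) \<partial>lborel)"
    using r \<open>u < r\<close>
    by (intro nn_integral_cong)
       (auto simp: exponential_density_def ennreal_mult'[symmetric] field_simps exp_add[symmetric]
             simp del: ennreal_mult')
  also have "\<dots> = ennreal (r / (r - u)) * (\<integral>\<^sup>+x. ennreal (erlang_density 0 (r - u) x * x ^ 0) \<partial>lborel)"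
    by (rule nn_integral_cmult) auto
  also have "\<dots> = ennreal (r / (r - u))"
    using \<open>u < r\<close> by (subst nn_integral_erlang_ith_moment) auto
  finally show "(\<integral>\<^sup>+\<omega>. ennreal (exp (u * X \<omega>)) \<partial>M) = ennreal (r / (r - u))" .
qed simp

lemma weighted_exponential_sum_mgf:
  fixes X :: "'i \<Rightarrow> 'a \<Rightarrow> real"
  assumes indep: "indep_vars (\<lambda>_. borel) X I" and "finite I"
    and D: "\<And>i. i \<in> I \<Longrightarrow> distributed M lborel (X i) (exponential_density 1)"
    and l: "\<And>i. i \<in> I \<Longrightarrow> l i > 0" and c: "\<And>i. i \<in> I \<Longrightarrow> c < l i"
  shows "integrable M (\<lambda>\<omega>. exp (c * (\<Sum>i\<in>I. X i \<omega> / l i)))"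
    and "expectation (\<lambda>\<omega>. exp (c * (\<Sum>i\<in>I. X i \<omega> / l i))) = (\<Prod>i\<in>I. 1 / (1 - c / l i))"
proof -
  define g where "g i x = exp (c / l i * x)" for i x
  have exp_sum_eq: "exp (c * (\<Sum>i\<in>I. X i \<omega> / l i)) = (\<Prod>i\<in>I. g i (X i \<omega>))" for \<omega>
    using \<open>finite I\<close> by (simp add: g_def sum_distrib_left exp_sum)
  have g: "g i \<in> borel_measurable borel" for i unfolding g_def by measurable
  have mgf: "has_bochner_integral M (\<lambda>\<omega>. g i (X i \<omega>)) (1 / (1 - c / l i))" if "i \<in> I" for i
    using exponential_distributed_mgf[OF D, of i "c / l i"] c[OF that] l[OF that] that
    by (simp add: g_def)
  then have int: "integrable M (\<lambda>\<omega>. g i (X i \<omega>))" if "i \<in> I" for i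
    using that by (simp add: has_bochner_integral_iff)
  show "integrable M (\<lambda>\<omega>. exp (c * (\<Sum>i\<in>I. X i \<omega> / l i)))"
    unfolding exp_sum_eq using indep \<open>finite I\<close> g int by (rule expectation_prod_indep_vars(1))
  have "expectation (\<lambda>\<omega>. exp (c * (\<Sum>i\<in>I. X i \<omega> / l i)))
        = (\<Prod>i\<in>I. expectation (\<lambda>\<omega>. g i (X i \<omega>)))"
    unfolding exp_sum_eq using indep \<open>finite I\<close> g int by (rule expectation_prod_indep_vars(2))
  also have "\<dots> = (\<Prod>i\<in>I. 1 / (1 - c / l i))"
    using mgf by (intro prod.cong) (auto intro: has_bochner_integral_integral_eq)
  finally show "expectation (\<lambda>\<omega>. exp (c * (\<Sum>i\<in>I. X i \<omega> / l i))) = (\<Prod>i\<in>I. 1 / (1 - c / l i))" .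
qed

lemma prob_le_mgf_divide_exp:
  fixes Y :: "'a \<Rightarrow> real"
  assumes int: "integrable M (\<lambda>\<omega>. exp (c * Y \<omega>))"
    and S: "S \<in> events" and le: "\<And>\<omega>. \<omega> \<in> S \<Longrightarrow> c * t \<le> c * Y \<omega>"
  shows "prob S \<le> expectation (\<lambda>\<omega>. exp (c * Y \<omega>)) / exp (c * t)"
proof -
  have "(\<lambda>\<omega>. exp (c * Y \<omega>)) \<in> borel_measurable M" using int by auto
  then have "{\<omega> \<in> space M. exp (c * t) \<le> exp (c * Y \<omega>)} \<in> events" by measurable
  moreover have "S \<subseteq> {\<omega> \<in> space M. exp (c * t) \<le> exp (c * Y \<omega>)}"
    using le sets.sets_into_space[OF S] by auto
  ultimately have "prob S \<le> prob {\<omega> \<in> space M. exp (c * t) \<le> exp (c * Y \<omega>)}"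
    by (intro finite_measure_mono)
  also have "\<dots> \<le> expectation (\<lambda>\<omega>. exp (c * Y \<omega>)) / exp (c * t)"
    by (rule integral_Markov_inequality_measure[OF int, of "space M"]) auto
  finally show ?thesis .
qed

lemma prob_exponential_all_le:
  fixes X :: "'i \<Rightarrow> 'a \<Rightarrow> real"
  assumes indep: "indep_vars (\<lambda>_. borel) X I" and "finite I"
    and D: "\<And>i. i \<in> I \<Longrightarrow> distributed M lborel (X i) (exponential_density 1)"
    and a: "\<And>i. i \<in> I \<Longrightarrow> a i \<ge> 0"
  shows "prob {\<omega> \<in> space M. \<forall>i\<in>I. X i \<omega> \<le> a i} = (\<Prod>i\<in>I. 1 - exp (- a i))"
proof -
  define g :: "'i \<Rightarrow> real \<Rightarrow> real" where "g i = indicator {..a i}" for i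
  have g: "g i \<in> borel_measurable borel" for i unfolding g_def by measurable
  have int: "integrable M (\<lambda>\<omega>. g i (X i \<omega>))"
    and exp_g: "expectation (\<lambda>\<omega>. g i (X i \<omega>)) = 1 - exp (- a i)" if "i \<in> I" for i
  proof -
    have [measurable]: "X i \<in> borel_measurable M"
      using distributed_measurable[OF D[OF that]] by simp
    show "integrable M (\<lambda>\<omega>. g i (X i \<omega>))"
      by (rule integrable_const_bound[where B=1]) (auto simp: g_def indicator_def)
    have "expectation (\<lambda>\<omega>. g i (X i \<omega>)) = expectation (indicator {\<omega> \<in> space M. X i \<omega> \<le> a i})"
      by (intro Bochner_Integration.integral_cong) (auto simp: g_def indicator_def)
    also have "\<dots> = prob {\<omega> \<in> space M. X i \<omega> \<le> a i}"
      by (simp add: Int_absorb2 subset_iff)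
    also have "\<dots> = 1 - exp (- a i)"
      using exponential_distributedD_le[OF D[OF that] a[OF that]] by simp
    finally show "expectation (\<lambda>\<omega>. g i (X i \<omega>)) = 1 - exp (- a i)" .
  qed
  have "prob {\<omega> \<in> space M. \<forall>i\<in>I. X i \<omega> \<le> a i}
        = expectation (indicator {\<omega> \<in> space M. \<forall>i\<in>I. X i \<omega> \<le> a i})"
    by (simp add: Int_absorb2 subset_iff)
  also have "\<dots> = expectation (\<lambda>\<omega>. \<Prod>i\<in>I. g i (X i \<omega>))"
    using \<open>finite I\<close>
    by (intro Bochner_Integration.integral_cong) (auto simp: g_def indicator_def)
  also have "\<dots> = (\<Prod>i\<in>I. 1 - exp (- a i))"
    by (simp add: expectation_prod_indep_vars(2)[OF indep \<open>finite I\<close> g int] exp_g)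
  finally show ?thesis .
qed

lemma prob_weighted_exponential_sum_le_lower:
  fixes X :: "'i \<Rightarrow> 'a \<Rightarrow> real"
  assumes indep: "indep_vars (\<lambda>_. borel) X I" and I: "finite I" "I \<noteq> {}"
    and D: "\<And>i. i \<in> I \<Longrightarrow> distributed M lborel (X i) (exponential_density 1)"
    and l: "\<And>i. i \<in> I \<Longrightarrow> l i > 0" and t: "t \<ge> 0"
  shows "t ^ card I / (\<Prod>i\<in>I. real (card I) + l i * t) * (\<Prod>i\<in>I. l i)
           \<le> prob {\<omega> \<in> space M. (\<Sum>i\<in>I. X i \<omega> / l i) \<le> t}"
proof -
  define n where "n = real (card I)"
  have n: "n > 0" using I by (simp add: n_def card_gt_0_iff)
  define a where "a i = l i * t / n" for i
  have a: "a i \<ge> 0" if "i \<in> I" for i using l[OF that] t n by (simp add: a_def)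
  define E where "E = {\<omega> \<in> space M. \<forall>i\<in>I. X i \<omega> \<le> a i}"
  have "t ^ card I / (\<Prod>i\<in>I. n + l i * t) * (\<Prod>i\<in>I. l i) = (\<Prod>i\<in>I. l i * t / (n + l i * t))"
    by (simp add: prod_dividef prod.distrib)
  also have "\<dots> = (\<Prod>i\<in>I. a i / (1 + a i))"
    using n by (intro prod.cong) (auto simp: a_def field_simps)
  also have "\<dots> \<le> (\<Prod>i\<in>I. 1 - exp (- a i))"
    using a by (intro prod_mono) (auto intro: divide_one_plus_le_one_minus_exp)
  also have "\<dots> = prob E"
    unfolding E_def using indep I(1) D a by (rule prob_exponential_all_le[symmetric])
  also have "\<dots> \<le> prob {\<omega> \<in> space M. (\<Sum>i\<in>I. X i \<omega> / l i) \<le> t}"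
  proof (rule finite_measure_mono)
    have "(\<Sum>i\<in>I. X i \<omega> / l i) \<le> (\<Sum>i\<in>I. a i / l i)" if "\<omega> \<in> E" for \<omega>
      using that l by (intro sum_mono divide_right_mono) (auto simp: E_def less_imp_le)
    moreover have "(\<Sum>i\<in>I. a i / l i) = (\<Sum>i\<in>I. t / n)"
      using l by (intro sum.cong) (auto simp: a_def less_imp_neq[symmetric])
    moreover have "(\<Sum>i\<in>I. t / n) = t"
      using n by (simp add: n_def)
    ultimately show "E \<subseteq> {\<omega> \<in> space M. (\<Sum>i\<in>I. X i \<omega> / l i) \<le> t}"
      by (auto simp: E_def)
    have [measurable]: "X i \<in> borel_measurable M" if "i \<in> I" for i
      using distributed_measurable[OF D[OF that]] by simp
    show "{\<omega> \<in> space M. (\<Sum>i\<in>I. X i \<omega> / l i) \<le> t} \<in> events"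
      by measurable
  qed
  finally show ?thesis by (simp add: n_def)
qed

lemma prob_weighted_exponential_sum_le_upper_pos:
  fixes X :: "'i \<Rightarrow> 'a \<Rightarrow> real"
  assumes indep: "indep_vars (\<lambda>_. borel) X I" and I: "finite I" "I \<noteq> {}"
    and D: "\<And>i. i \<in> I \<Longrightarrow> distributed M lborel (X i) (exponential_density 1)"
    and l: "\<And>i. i \<in> I \<Longrightarrow> l i > 0" and t: "t > 0"
  shows "prob {\<omega> \<in> space M. (\<Sum>i\<in>I. X i \<omega> / l i) \<le> t}
           \<le> (exp 1 * t / real (card I)) ^ card I * (\<Prod>i\<in>I. l i)"
proof -
  have [measurable]: "X i \<in> borel_measurable M" if "i \<in> I" for i
    using distributed_measurable[OF D[OF that]] by simp
  define n where "n = real (card I)"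
  have n: "n > 0" using I by (simp add: n_def card_gt_0_iff)
  define c where "c = - (n / t)"
  have c: "c < l i" if "i \<in> I" for i
    using l[OF that] n t by (simp add: c_def) (smt (verit) divide_pos_pos)
  have "prob {\<omega> \<in> space M. (\<Sum>i\<in>I. X i \<omega> / l i) \<le> t}
        \<le> expectation (\<lambda>\<omega>. exp (c * (\<Sum>i\<in>I. X i \<omega> / l i))) / exp (c * t)"
    using mult_left_mono_neg[of _ t c] n t
    by (intro prob_le_mgf_divide_exp weighted_exponential_sum_mgf(1)[OF indep I(1) D l c])
       (auto simp: c_def)
  also have "\<dots> = (\<Prod>i\<in>I. 1 / (1 - c / l i)) * exp 1 ^ card I"
  proof -
    have "exp (c * t) = inverse (exp 1 ^ card I)"
      using t by (simp add: c_def n_def exp_minus exp_of_nat_mult[symmetric])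
    then show ?thesis
      by (simp only: weighted_exponential_sum_mgf(2)[OF indep I(1) D l c]) (simp add: divide_inverse)
  qed
  also have "\<dots> \<le> (\<Prod>i\<in>I. t / n * l i) * exp 1 ^ card I"
  proof (intro mult_right_mono prod_mono conjI)
    fix i assume i: "i \<in> I"
    have "1 / (1 - c / l i) = t * l i / (t * l i + n)"
      using l[OF i] t by (simp add: c_def field_simps)
    also have "\<dots> \<le> t * l i / n"
      using l[OF i] t n by (intro divide_left_mono) (auto intro!: mult_pos_pos add_pos_pos)
    finally show "1 / (1 - c / l i) \<le> t / n * l i" by simp
    show "0 \<le> 1 / (1 - c / l i)" using l[OF i] t n by (simp add: c_def field_simps)
  qed simp
  also have "\<dots> = (exp 1 * t / n) ^ card I * (\<Prod>i\<in>I. l i)"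
    by (subst prod.distrib) (simp add: power_mult_distrib[symmetric] mult_ac)
  finally show ?thesis by (simp add: n_def)
qed

lemma prob_weighted_exponential_sum_le_upper:
  fixes X :: "'i \<Rightarrow> 'a \<Rightarrow> real"
  assumes indep: "indep_vars (\<lambda>_. borel) X I" and I: "finite I" "I \<noteq> {}"
    and D: "\<And>i. i \<in> I \<Longrightarrow> distributed M lborel (X i) (exponential_density 1)"
    and l: "\<And>i. i \<in> I \<Longrightarrow> l i > 0" and t: "t \<ge> 0"
  shows "prob {\<omega> \<in> space M. (\<Sum>i\<in>I. X i \<omega> / l i) \<le> t}
           \<le> (exp 1 * t / real (card I)) ^ card I * (\<Prod>i\<in>I. l i)"
proof (cases "t = 0")
  case True
  have [measurable]: "X i \<in> borel_measurable M" if "i \<in> I" for i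
    using distributed_measurable[OF D[OF that]] by simp
  define bound where "bound s = (exp 1 * s / real (card I)) ^ card I * (\<Prod>i\<in>I. l i)" for s
  have "(bound \<longlongrightarrow> bound 0) (at_right 0)"
    unfolding bound_def using I by (intro tendsto_intros) (auto simp: card_eq_0_iff)
  moreover have "\<forall>\<^sub>F s in at_right 0. prob {\<omega> \<in> space M. (\<Sum>i\<in>I. X i \<omega> / l i) \<le> 0} \<le> bound s"
    using eventually_at_right_less[of "0::real"]
  proof eventually_elim
    case (elim s)
    have "prob {\<omega> \<in> space M. (\<Sum>i\<in>I. X i \<omega> / l i) \<le> 0}
          \<le> prob {\<omega> \<in> space M. (\<Sum>i\<in>I. X i \<omega> / l i) \<le> s}"
      using elim by (intro finite_measure_mono) auto
    also have "\<dots> \<le> bound s"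
      unfolding bound_def by (rule prob_weighted_exponential_sum_le_upper_pos[OF indep I D l elim])
    finally show ?case .
  qed
  ultimately have "prob {\<omega> \<in> space M. (\<Sum>i\<in>I. X i \<omega> / l i) \<le> 0} \<le> bound 0"
    by (rule tendsto_lowerbound) simp
  then show ?thesis
    using True by (simp add: bound_def)
next
  case False
  then show ?thesis using t by (intro prob_weighted_exponential_sum_le_upper_pos[OF indep I D l]) auto
qed

lemma prob_weighted_exponential_sum_ge_tail:
  fixes X :: "'i \<Rightarrow> 'a \<Rightarrow> real"
  assumes indep: "indep_vars (\<lambda>_. borel) X I" and I: "finite I" "I \<noteq> {}"
    and D: "\<And>i. i \<in> I \<Longrightarrow> distributed M lborel (X i) (exponential_density 1)"
    and lam: "lam > 0" and l: "\<And>i. i \<in> I \<Longrightarrow> l i \<ge> lam"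
    and t: "t \<ge> (\<Sum>i\<in>I. 1 / l i)"
  shows "prob {\<omega> \<in> space M. (\<Sum>i\<in>I. X i \<omega> / l i) \<ge> t}
           \<le> exp (- (lam * (t - (\<Sum>i\<in>I. 1 / l i))\<^sup>2 / (2 * t)))"
proof -
  have [measurable]: "X i \<in> borel_measurable M" if "i \<in> I" for i
    using distributed_measurable[OF D[OF that]] by simp
  have l_pos: "l i > 0" if "i \<in> I" for i using l[OF that] lam by simp
  define L where "L = (\<Sum>i\<in>I. 1 / l i)"
  have "L > 0" unfolding L_def using I l_pos by (intro sum_pos) auto
  then have "t > 0" using t by (simp add: L_def)
  define a where "a = 1 - L / t"
  have a: "0 \<le> a" "a < 1" using t \<open>t > 0\<close> \<open>L > 0\<close> by (auto simp: a_def L_def field_simps)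
  define c where "c = lam * a"
  define K where "K = 1 + a / (2 * (1 - a))"
  have x: "0 \<le> c / l i" "c / l i \<le> a" if "i \<in> I" for i
    using l[OF that] lam a by (auto simp: c_def field_simps intro: mult_left_mono)
  have x_less_1: "c / l i < 1" if "i \<in> I" for i using x(2)[OF that] a by linarith
  have c: "c < l i" if "i \<in> I" for i
    using x_less_1[OF that] l_pos[OF that] by (simp add: divide_less_eq)
  have "prob {\<omega> \<in> space M. (\<Sum>i\<in>I. X i \<omega> / l i) \<ge> t}
        \<le> expectation (\<lambda>\<omega>. exp (c * (\<Sum>i\<in>I. X i \<omega> / l i))) / exp (c * t)"
    using mult_left_mono[of t _ c] lam a
    by (intro prob_le_mgf_divide_exp weighted_exponential_sum_mgf(1)[OF indep I(1) D l_pos c])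
       (auto simp: c_def)
  also have "\<dots> = (\<Prod>i\<in>I. 1 / (1 - c / l i)) / exp (c * t)"
    by (simp only: weighted_exponential_sum_mgf(2)[OF indep I(1) D l_pos c])
  also have "\<dots> \<le> (\<Prod>i\<in>I. exp (c / l i * K)) / exp (c * t)"
    unfolding K_def using x x_less_1 a
    by (intro divide_right_mono prod_mono conjI inverse_one_minus_le_exp) (auto simp: less_imp_le)
  also have "\<dots> = exp (c * L * K - c * t)"
    using I by (simp add: exp_sum[symmetric] exp_diff L_def sum_distrib_left sum_distrib_right)
  also have "c * L * K - c * t = - (lam * (t - L)\<^sup>2 / (2 * t))"
  proof -
    have L: "L = t * (1 - a)" using \<open>t > 0\<close> by (simp add: a_def)
    show ?thesis unfolding L c_def K_def using \<open>t > 0\<close> a by (simp add: field_simps power2_eq_square)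
  qed
  finally show ?thesis by (simp add: L_def)
qed

end

theorem lemma2p1:
  fixes M :: "'a measure" and X :: "nat \<Rightarrow> 'a \<Rightarrow> real" and l :: "nat \<Rightarrow> real"
  assumes "prob_space M"
    and "prob_space.indep_vars M (\<lambda>_. borel) X UNIV"
    and "\<And>i. distributed M lborel (X i) (exponential_density 1)"
    and "\<And>i. l i > 0"
  shows "(\<forall>t::real. \<forall>k::nat. t \<ge> 0 \<and> k \<ge> 1 \<longrightarrow>
            t ^ k / (\<Prod>i<k. real k + l i * t) * (\<Prod>i<k. l i)
              \<le> measure M {\<omega> \<in> space M. (\<Sum>i<k. X i \<omega> / l i) \<le> t}
          \<and> measure M {\<omega> \<in> space M. (\<Sum>i<k. X i \<omega> / l i) \<le> t}
              \<le> (exp 1 * t / real k) ^ k * (\<Prod>i<k. l i))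
       \<and> (\<forall>lam::real. \<forall>k::nat. lam > 0 \<and> (\<forall>i. l i \<ge> lam) \<and> k \<ge> 1 \<longrightarrow>
            (\<forall>t::real. t \<ge> (\<Sum>i<k. 1 / l i) \<longrightarrow>
               measure M {\<omega> \<in> space M. (\<Sum>i<k. X i \<omega> / l i) \<ge> t}
                 \<le> exp (- (lam * (t - (\<Sum>i<k. 1 / l i))^2 / (2 * t)))))"
proof -
  interpret prob_space M by fact
  have indep: "indep_vars (\<lambda>_. borel) X {..<k}" for k
    using assms(2) by (rule indep_vars_subset) simp
  have I: "finite {..<k}" "{..<k} \<noteq> {}" if "k \<ge> 1" for k :: nat
    using that by (auto simp: lessThan_empty_iff)
  show ?thesis
    using prob_weighted_exponential_sum_le_lower[OF indep I _ assms(4)]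
      prob_weighted_exponential_sum_le_upper[OF indep I _ assms(4)]
      prob_weighted_exponential_sum_ge_tail[OF indep I]
      assms(3)
    by auto
qed

end
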